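(* Let $n\ge1$, let $\mathbf u(z)\in\mathbb R^n$ be a column vector function and let $A$ be a constant real skew-symmetric $n\times n$ matrix. Define block matrices of block size $(1,n,1)\times(1,n,1)$ \[ {\cal B}_0=\begin{pmatrix} -1 & 0 & 0\\ 0 & 0 & 0\\ 0 & 0 & 1 \end{pmatrix},\quad {\cal B}_1=\begin{pmatrix} 0 & \mathbf u^T & 0\\ \mathbf u & 0 & \mathbf u\\ 0 & \mathbf u^T & 0 \end{pmatrix},\quad {\cal B}_2=\begin{pmatrix} (\mathbf u,\mathbf u) & -(\mathbf u')^T & 0\\ \mathbf u' & 0 & -\mathbf u'\\ 0 & (\mathbf u')^T & -(\mathbf u,\mathbf u)\end{pmatrix}, \] \[ {\cal B}_3=\begin{pmatrix} 0 & (\mathbf u,\mathbf u)\mathbf u^T & 0\\ (\mathbf u,\mathbf u)\mathbf u & 2\mathbf u'\mathbf u^T-2\mathbf u(\mathbf u')^T & (\mathbf u,\mathbf u)\mathbf u\\ 0 & (\mathbf u,\mathbf u)\mathbf u^T & 0 \end{pmatrix},\quad {\cal A}_0=\begin{pmatrix} 0&0&0\\ 0&A&0\\ 0&0&0 \end{pmatrix}, \] and \[ {\cal A}=-\zeta(\zeta{\cal B}_0+{\cal B}_1)+z{\cal B}_0-{\cal B}_2-\zeta^{-1}({\cal B}''_1-z{\cal B}_1-{\cal B}_3-{\cal A}_0),\qquad {\cal B}=\zeta{\cal B}_0+{\cal B}_1. \] Then the equation \[ \mathbf u'''= 3(\mathbf u,\mathbf u)\mathbf u'+z\mathbf u'+\mathbf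 u+A\mathbf u \] admits the isomonodromic Lax representation ${\cal A}'={\cal B}_\zeta+[{\cal B},{\cal A}]$.
   Context: Primes denote derivatives with respect to $z$; $\zeta$ is a spectral parameter independent of $z$; $(\cdot,\cdot)$ is the standard scalar product. "Admits the Lax representation" means the matrix equation holds identically in $\zeta$ by virtue of the equation. *)

theory Defs
  imports "HOL-Analysis.Analysis"
begin

text \<open>Block index set of block size (1,n,1): Inl () is the first row/column,
  Inr (Inl i) the middle block (i ranges over the n-element type 'n),
  Inr (Inr ()) the last row/column.\<close>
type_synonym 'n bidx = "unit + 'n + unit"

definition blockM ::
  "real \<Rightarrow> real^('n::finite) \<Rightarrow> real \<Rightarrow>
   real^'n \<Rightarrow> real^'n^'n \<Rightarrow> real^'n \<Rightarrow>
   real \<Rightarrow> real^'n \<Rightarrow> real \<Rightarrow> real^('n bidx)^('n bidx)" where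
  "blockM a11 r12 a13 c21 M22 c23 a31 r32 a33 =
     (\<chi> i j. case i of
        Inl _ \<Rightarrow> (case j of Inl _ \<Rightarrow> a11 | Inr (Inl q) \<Rightarrow> r12 $ q | Inr (Inr _) \<Rightarrow> a13)
      | Inr (Inl p) \<Rightarrow> (case j of Inl _ \<Rightarrow> c21 $ p | Inr (Inl q) \<Rightarrow> M22 $ p $ q
                                | Inr (Inr _) \<Rightarrow> c23 $ p)
      | Inr (Inr _) \<Rightarrow> (case j of Inl _ \<Rightarrow> a31 | Inr (Inl q) \<Rightarrow> r32 $ q | Inr (Inr _) \<Rightarrow> a33))"

definition outerp :: "real^('n::finite) \<Rightarrow> real^'n \<Rightarrow> real^'n^'n" where
  "outerp v w = (\<chi> p q. v $ p * w $ q)"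

definition LB0 :: "real^(('n::finite) bidx)^('n bidx)" where
  "LB0 = blockM (-1) 0 0  0 0 0  0 0 1"

definition LB1 :: "real^('n::finite) \<Rightarrow> real^('n bidx)^('n bidx)" where
  "LB1 u = blockM 0 u 0  u 0 u  0 u 0"

definition LB2 :: "real^('n::finite) \<Rightarrow> real^'n \<Rightarrow> real^('n bidx)^('n bidx)" where
  "LB2 u u1 = blockM (u \<bullet> u) (- u1) 0  u1 0 (- u1)  0 u1 (- (u \<bullet> u))"

definition LB3 :: "real^('n::finite) \<Rightarrow> real^'n \<Rightarrow> real^('n bidx)^('n bidx)" where
  "LB3 u u1 = blockM 0 ((u \<bullet> u) *\<^sub>R u) 0
                    ((u \<bullet> u) *\<^sub>R u) (2 *\<^sub>R outerp u1 u - 2 *\<^sub>R outerp u u1) ((u \<bullet> u) *\<^sub>R u)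
                    0 ((u \<bullet> u) *\<^sub>R u) 0"

definition LA0 :: "real^('n::finite)^'n \<Rightarrow> real^('n bidx)^('n bidx)" where
  "LA0 A = blockM 0 0 0  0 A 0  0 0 0"

definition LaxB :: "real^('n::finite) \<Rightarrow> real \<Rightarrow> real^('n bidx)^('n bidx)" where
  "LaxB u \<zeta> = \<zeta> *\<^sub>R LB0 + LB1 u"

text \<open>The matrix A(z,zeta), with u = u(z), u1 = u'(z), u2 = u''(z);
  B1'' = LB1 u2 since B1 is linear in u.\<close>
definition LaxA :: "real^('n::finite)^'n \<Rightarrow> real^'n \<Rightarrow> real^'n \<Rightarrow> real^'n \<Rightarrow> real \<Rightarrow> real
                    \<Rightarrow> real^('n bidx)^('n bidx)" where
  "LaxA A u u1 u2 z \<zeta> =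
     - (\<zeta> *\<^sub>R (\<zeta> *\<^sub>R LB0 + LB1 u)) + z *\<^sub>R LB0 - LB2 u u1
     - inverse \<zeta> *\<^sub>R (LB1 u2 - z *\<^sub>R LB1 u - LB3 u u1 - LA0 A)"

end

theory Submission
  imports Defs
begin

(* Expanding in powers of \<zeta>, write \<A> = -\<zeta> \<B> + z B0 - B2 - \<zeta>^-1 C with
   C = B1'' - z B1 - B3 - A0.  By bilinearity of the commutator and [\<B>,\<B>] = 0, the Lax
   equation reduces to three coefficient identities: B1' = [B0,B2] at \<zeta>^1,
   B2' = [B0,C] + z [B0,B1] + [B1,B2] at \<zeta>^0 (the term z B0 of \<A> contributes
   B0 = \<B>_\<zeta>), and C' = [B1,C] at \<zeta>^-1.  Computing with the block structure, the first
   two hold identically in u; the third reduces to the differential equation, with skew-symmetry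
   of A turning u^T A into -(A u)^T. *)

definition commutator :: "real^'m^'m \<Rightarrow> real^'m^'m \<Rightarrow> real^'m^'m" where
  "commutator X Y = X ** Y - Y ** X"

lemma bilinear_commutator: "bilinear commutator"
  by (simp add: bilinear_def linear_iff commutator_def matrix_matrix_mult_def vec_eq_iff
      algebra_simps sum.distrib sum_subtractf sum_distrib_left)

lemmas commutator_bilinear_simps =
  bilinear_ladd[OF bilinear_commutator] bilinear_radd[OF bilinear_commutator]
  bilinear_lsub[OF bilinear_commutator] bilinear_rsub[OF bilinear_commutator]
  bilinear_lneg[OF bilinear_commutator] bilinear_rneg[OF bilinear_commutator]
  bilinear_lmul[OF bilinear_commutator] bilinear_rmul[OF bilinear_commutator]

lemma commutator_self [simp]: "commutator X X = 0"
  by (simp add: commutator_def)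

lemma commutator_swap: "commutator Y X = - commutator X Y"
  by (simp add: commutator_def)

lemma Lax_equation_from_coefficients:
  fixes B0 B1 B2 C B1' B2' C' :: "real^'m^'m"
  assumes "\<zeta> \<noteq> 0"
    and "B1' = commutator B0 B2"
    and "B2' = commutator B0 C + z *\<^sub>R commutator B0 B1 + commutator B1 B2"
    and "C' = commutator B1 C"
  shows "- (\<zeta> *\<^sub>R B1') + B0 - B2' - inverse \<zeta> *\<^sub>R C'
    = B0 + commutator (\<zeta> *\<^sub>R B0 + B1)
             (- (\<zeta> *\<^sub>R (\<zeta> *\<^sub>R B0 + B1)) + z *\<^sub>R B0 - B2 - inverse \<zeta> *\<^sub>R C)"
  using assms
  by (simp add: commutator_bilinear_simps commutator_swap[of B1 B0] algebra_simps)

lemma sum_UNIV_sum_type: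
  fixes f :: "('a::finite + 'b::finite) \<Rightarrow> 'c::comm_monoid_add"
  shows "sum f UNIV = (\<Sum>x\<in>UNIV. f (Inl x)) + (\<Sum>y\<in>UNIV. f (Inr y))"
proof -
  have "sum f UNIV = sum f (Inl ` UNIV) + sum f (Inr ` UNIV)"
    unfolding UNIV_sum by (rule sum.union_disjoint) auto
  then show ?thesis
    by (simp add: sum.reindex)
qed

lemma sum_bidx:
  fixes f :: "('n::finite) bidx \<Rightarrow> 'c::comm_monoid_add"
  shows "sum f UNIV = f (Inl ()) + (\<Sum>q\<in>UNIV. f (Inr (Inl q))) + f (Inr (Inr ()))"
  by (simp add: sum_UNIV_sum_type add.assoc UNIV_unit)

lemma outerp_0 [simp]: "outerp 0 v = 0" "outerp v 0 = 0"
  by (simp_all add: outerp_def vec_eq_iff)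

lemma outerp_nth [simp]: "outerp a b $ i $ j = a $ i * b $ j"
  by (simp add: outerp_def)

lemma outerp_contract:
  fixes a b v :: "real^'n::finite"
  shows "v v* outerp a b = (v \<bullet> a) *\<^sub>R b" "outerp a b *v v = (b \<bullet> v) *\<^sub>R a"
  by (simp_all add: vec_eq_iff vector_matrix_mult_def matrix_vector_mult_def outerp_def inner_vec_def
      sum_distrib_left sum_distrib_right algebra_simps)

lemma vector_matrix_mult_skew:
  fixes A :: "real^'n::finite^'n"
  assumes "transpose A = - A"
  shows "v v* A = - (A *v v)"
  by (metis assms transpose_matrix_vector matrix_vector_mult_diff_rdistrib diff_0 matrix_vector_mult_0)

lemma blockM_add:
  "blockM a11 r12 a13 c21 M c23 a31 r32 a33 + blockM b11 s12 b13 d21 N d23 b31 s32 b33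
   = blockM (a11+b11) (r12+s12) (a13+b13) (c21+d21) (M+N) (c23+d23) (a31+b31) (r32+s32) (a33+b33)"
  by (simp add: vec_eq_iff blockM_def split: sum.split)

lemma blockM_diff:
  "blockM a11 r12 a13 c21 M c23 a31 r32 a33 - blockM b11 s12 b13 d21 N d23 b31 s32 b33
   = blockM (a11-b11) (r12-s12) (a13-b13) (c21-d21) (M-N) (c23-d23) (a31-b31) (r32-s32) (a33-b33)"
  by (simp add: vec_eq_iff blockM_def split: sum.split)

lemma blockM_uminus:
  "- blockM a11 r12 a13 c21 M c23 a31 r32 a33
   = blockM (-a11) (-r12) (-a13) (-c21) (-M) (-c23) (-a31) (-r32) (-a33)"
  by (simp add: vec_eq_iff blockM_def split: sum.split)

lemma blockM_scaleR:
  "c *\<^sub>R blockM a11 r12 a13 c21 M c23 a31 r32 a33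
   = blockM (c*a11) (c*\<^sub>Rr12) (c*a13) (c*\<^sub>Rc21) (c*\<^sub>RM) (c*\<^sub>Rc23) (c*a31) (c*\<^sub>Rr32) (c*a33)"
  by (simp add: vec_eq_iff blockM_def split: sum.split)

lemma blockM_eq_iff:
  "blockM a11 r12 a13 c21 M c23 a31 r32 a33 = blockM b11 s12 b13 d21 N d23 b31 s32 b33 \<longleftrightarrow>
   a11 = b11 \<and> r12 = s12 \<and> a13 = b13 \<and> c21 = d21 \<and> M = N \<and> c23 = d23 \<and>
   a31 = b31 \<and> r32 = s32 \<and> a33 = b33"
  by (auto simp: blockM_def vec_eq_iff split_sum_all)

lemmas blockM_arith = blockM_add blockM_diff blockM_uminus blockM_scaleR

lemma blockM_mult:
  "blockM a11 r12 a13 c21 M c23 a31 r32 a33 ** blockM b11 s12 b13 d21 N d23 b31 s32 b33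
   = blockM (a11*b11 + r12 \<bullet> d21 + a13*b31)
            (a11 *\<^sub>R s12 + r12 v* N + a13 *\<^sub>R s32)
            (a11*b13 + r12 \<bullet> d23 + a13*b33)
            (b11 *\<^sub>R c21 + M *v d21 + b31 *\<^sub>R c23)
            (outerp c21 s12 + M ** N + outerp c23 s32)
            (b13 *\<^sub>R c21 + M *v d23 + b33 *\<^sub>R c23)
            (a31*b11 + r32 \<bullet> d21 + a33*b31)
            (a31 *\<^sub>R s12 + r32 v* N + a33 *\<^sub>R s32)
            (a31*b13 + r32 \<bullet> d23 + a33*b33)"
  unfolding vec_eq_iff
  apply (intro allI)
  subgoal for i j
    by (cases i rule: sum.exhaust; cases j rule: sum.exhaust)
       (auto simp: blockM_def matrix_matrix_mult_def sum_bidx inner_vec_def outerp_def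
          vector_matrix_mult_def matrix_vector_mult_def mult.commute split: sum.split)
  done

lemma commutator_LB0_blockM:
  "commutator LB0 (blockM a11 r12 a13 c21 M c23 a31 r32 a33)
   = blockM 0 (- r12) (- 2 * a13) c21 0 (- c23) (2 * a31) r32 0"
  by (simp add: commutator_def LB0_def blockM_mult blockM_diff)

lemma has_vector_derivative_componentwise:
  fixes f :: "real \<Rightarrow> 'a::real_normed_vector^'m"
  assumes "\<And>i. ((\<lambda>t. f t $ i) has_vector_derivative D $ i) F"
  shows "(f has_vector_derivative D) F"
  using assms unfolding has_vector_derivative_def has_derivative_def
  by (auto intro!: bounded_linear_scaleR_left vec_tendstoI)

lemma has_vector_derivative_vec_nth:
  fixes f :: "real \<Rightarrow> 'a::real_normed_vector^'m"
  assumes "(f has_vector_derivative D) F"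
  shows "((\<lambda>t. f t $ i) has_vector_derivative D $ i) F"
  using bounded_linear.has_vector_derivative[OF bounded_linear_vec_nth assms] by simp

lemma blockM_has_vector_derivative:
  fixes a11 a13 a31 a33 :: "real \<Rightarrow> real" and r12 c21 c23 r32 :: "real \<Rightarrow> real^'n::finite"
    and M :: "real \<Rightarrow> real^'n^'n"
  assumes "(a11 has_field_derivative b11) F" "(r12 has_vector_derivative s12) F"
    "(a13 has_field_derivative b13) F" "(c21 has_vector_derivative d21) F"
    "(M has_vector_derivative N) F" "(c23 has_vector_derivative d23) F"
    "(a31 has_field_derivative b31) F" "(r32 has_vector_derivative s32) F"
    "(a33 has_field_derivative b33) F"
  shows "((\<lambda>t. blockM (a11 t) (r12 t) (a13 t) (c21 t) (M t) (c23 t) (a31 t) (r32 t) (a33 t))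
     has_vector_derivative blockM b11 s12 b13 d21 N d23 b31 s32 b33) F"
  using assms unfolding has_real_derivative_iff_has_vector_derivative
  apply (intro has_vector_derivative_componentwise)
  subgoal for i j
    by (cases i rule: sum.exhaust; cases j rule: sum.exhaust)
       (auto simp: blockM_def has_vector_derivative_vec_nth split: sum.split)
  done

lemma has_field_derivative_inner:
  fixes f g :: "real \<Rightarrow> 'a::real_inner"
  assumes "(f has_vector_derivative f') (at x within s)" "(g has_vector_derivative g') (at x within s)"
    and "D = f x \<bullet> g' + f' \<bullet> g x"
  shows "((\<lambda>t. f t \<bullet> g t) has_field_derivative D) (at x within s)"
  unfolding has_real_derivative_iff_has_vector_derivative assms(3)
  by (rule bounded_bilinear.has_vector_derivative[OF bounded_bilinear_inner assms(1,2)])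

lemma has_vector_derivative_outerp:
  fixes f g :: "real \<Rightarrow> real^'n::finite"
  assumes "(f has_vector_derivative f') (at x within s)" "(g has_vector_derivative g') (at x within s)"
    and "D = outerp f' (g x) + outerp (f x) g'"
  shows "((\<lambda>t. outerp (f t) (g t)) has_vector_derivative D) (at x within s)"
  unfolding assms(3)
  apply (intro has_vector_derivative_componentwise)
  subgoal for i j
    using has_vector_derivative_mult[OF has_vector_derivative_vec_nth[OF assms(1), of i]
        has_vector_derivative_vec_nth[OF assms(2), of j]]
    by (simp add: algebra_simps)
  done

definition LaxC :: "real^('n::finite)^'n \<Rightarrow> real^'n \<Rightarrow> real^'n \<Rightarrow> real^'n \<Rightarrow> real
                    \<Rightarrow> real^('n bidx)^('n bidx)" where
  "LaxC A u u1 u2 z = LB1 u2 - z *\<^sub>R LB1 u - LB3 u u1 - LA0 A"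

definition LB2_deriv :: "real^('n::finite) \<Rightarrow> real^'n \<Rightarrow> real^'n \<Rightarrow> real^('n bidx)^('n bidx)" where
  "LB2_deriv u u1 u2 = blockM (2 * (u \<bullet> u1)) (- u2) 0  u2 0 (- u2)  0 u2 (- 2 * (u \<bullet> u1))"

definition LB3_deriv :: "real^('n::finite) \<Rightarrow> real^'n \<Rightarrow> real^'n \<Rightarrow> real^('n bidx)^('n bidx)" where
  "LB3_deriv u u1 u2 =
     (let d = (2 * (u \<bullet> u1)) *\<^sub>R u + (u \<bullet> u) *\<^sub>R u1
      in blockM 0 d 0  d (2 *\<^sub>R outerp u2 u - 2 *\<^sub>R outerp u u2) d  0 d 0)"

lemma LB1_eq_commutator_LB0_LB2: "LB1 u1 = commutator LB0 (LB2 u u1)"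
  by (simp add: LB1_def LB2_def commutator_LB0_blockM)

lemma LB2_deriv_eq_commutators:
  "LB2_deriv u u1 u2
   = commutator LB0 (LaxC A u u1 u2 z) + z *\<^sub>R commutator LB0 (LB1 u) + commutator (LB1 u) (LB2 u u1)"
  unfolding LB2_deriv_def LaxC_def LB0_def LB1_def LB2_def LB3_def LA0_def commutator_def
    blockM_arith blockM_mult blockM_eq_iff
  by (simp add: vec_eq_iff inner_commute algebra_simps)

lemma LaxC_deriv_eq_commutator:
  fixes A :: "real^'n::finite^'n"
  assumes skew: "transpose A = - A"
    and eq: "u3 = (3 * (u \<bullet> u)) *\<^sub>R u1 + z *\<^sub>R u1 + u + A *v u"
  shows "LB1 u3 - LB1 u - z *\<^sub>R LB1 u1 - LB3_deriv u u1 u2 = commutator (LB1 u) (LaxC A u u1 u2 z)"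
  unfolding eq LaxC_def LB1_def LB3_def LA0_def LB3_deriv_def Let_def commutator_def blockM_arith
    blockM_mult blockM_eq_iff
  by (simp add: outerp_contract vector_matrix_mult_skew[OF skew] vector_scaleR_matrix_ac
      scaleR_matrix_vector_assoc[symmetric] vec_eq_iff inner_commute algebra_simps)

lemma has_vector_derivative_LB1:
  "(f has_vector_derivative f') F \<Longrightarrow> ((\<lambda>t. LB1 (f t)) has_vector_derivative LB1 f') F"
  unfolding LB1_def by (intro blockM_has_vector_derivative derivative_intros)

lemma has_vector_derivative_LB2:
  assumes "(u has_vector_derivative u1 x) (at x within s)" "(u1 has_vector_derivative u2) (at x within s)"
  shows "((\<lambda>t. LB2 (u t) (u1 t)) has_vector_derivative LB2_deriv (u x) (u1 x) u2) (at x within s)"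
  unfolding LB2_def LB2_deriv_def
  by (rule blockM_has_vector_derivative;
      (rule derivative_eq_intros has_field_derivative_inner assms refl)+)
     (auto simp: inner_commute)

lemma has_vector_derivative_LB3:
  assumes "(u has_vector_derivative u1 x) (at x within s)" "(u1 has_vector_derivative u2) (at x within s)"
  shows "((\<lambda>t. LB3 (u t) (u1 t)) has_vector_derivative LB3_deriv (u x) (u1 x) u2) (at x within s)"
  unfolding LB3_def LB3_deriv_def Let_def
  by (rule blockM_has_vector_derivative;
      (rule derivative_eq_intros has_field_derivative_inner has_vector_derivative_outerp assms refl)+)
     (auto simp: inner_commute algebra_simps)

lemma has_vector_derivative_LaxC:
  assumes "(u has_vector_derivative u1 x) (at x within s)"
    and "(u1 has_vector_derivative u2 x) (at x within s)"
    and "(u2 has_vector_derivative u3) (at x within s)"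
  shows "((\<lambda>t. LaxC A (u t) (u1 t) (u2 t) t) has_vector_derivative
           LB1 u3 - LB1 (u x) - x *\<^sub>R LB1 (u1 x) - LB3_deriv (u x) (u1 x) (u2 x)) (at x within s)"
  unfolding LaxC_def
  by (rule derivative_eq_intros has_vector_derivative_LB1 has_vector_derivative_LB3 assms refl)+
     (simp add: algebra_simps)

lemma LaxA_eq_LaxC:
  "LaxA A u u1 u2 z \<zeta>
   = - (\<zeta> *\<^sub>R LaxB u \<zeta>) + z *\<^sub>R LB0 - LB2 u u1 - inverse \<zeta> *\<^sub>R LaxC A u u1 u2 z"
  by (simp add: LaxA_def LaxB_def LaxC_def)

lemma vector_derivative_LaxB: "vector_derivative (LaxB u) (at \<zeta>) = LB0"
  unfolding LaxB_def by (rule vector_derivative_at) (auto intro!: derivative_eq_intros)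

lemma Lax_equation_at:
  fixes A :: "real^'n::finite^'n"
  assumes skew: "transpose A = - A" and "\<zeta> \<noteq> 0"
    and "(u has_vector_derivative u1 z) (at z)"
    and "(u1 has_vector_derivative u2 z) (at z)"
    and "(u2 has_vector_derivative u3 z) (at z)"
    and eq: "u3 z = (3 * (u z \<bullet> u z)) *\<^sub>R u1 z + z *\<^sub>R u1 z + u z + A *v u z"
  shows "((\<lambda>t. LaxA A (u t) (u1 t) (u2 t) t \<zeta>) has_vector_derivative
           LB0 + commutator (LaxB (u z) \<zeta>) (LaxA A (u z) (u1 z) (u2 z) z \<zeta>)) (at z)"
proof -
  have "((\<lambda>t. LaxA A (u t) (u1 t) (u2 t) t \<zeta>) has_vector_derivative
          - (\<zeta> *\<^sub>R LB1 (u1 z)) + LB0 - LB2_deriv (u z) (u1 z) (u2 z)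
          - inverse \<zeta> *\<^sub>R (LB1 (u3 z) - LB1 (u z) - z *\<^sub>R LB1 (u1 z) - LB3_deriv (u z) (u1 z) (u2 z)))
        (at z)"
    unfolding LaxA_eq_LaxC LaxB_def
    by (rule derivative_eq_intros has_vector_derivative_LB1 has_vector_derivative_LB2
        has_vector_derivative_LaxC assms refl)+ simp
  also have "- (\<zeta> *\<^sub>R LB1 (u1 z)) + LB0 - LB2_deriv (u z) (u1 z) (u2 z)
          - inverse \<zeta> *\<^sub>R (LB1 (u3 z) - LB1 (u z) - z *\<^sub>R LB1 (u1 z) - LB3_deriv (u z) (u1 z) (u2 z))
      = LB0 + commutator (LaxB (u z) \<zeta>) (LaxA A (u z) (u1 z) (u2 z) z \<zeta>)"
    unfolding LaxA_eq_LaxC LaxB_def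
    by (rule Lax_equation_from_coefficients[OF \<open>\<zeta> \<noteq> 0\<close> LB1_eq_commutator_LB0_LB2
          LB2_deriv_eq_commutators LaxC_deriv_eq_commutator[OF skew eq]])
  finally show ?thesis .
qed

theorem mainTheorem12:
  fixes u u1 u2 u3 :: "real \<Rightarrow> real^'n" and A :: "real^'n^'n" and S :: "real set"
  assumes skew: "transpose A = - A"
    and S: "open S"
    and d1: "\<And>z. z \<in> S \<Longrightarrow> (u has_vector_derivative u1 z) (at z)"
    and d2: "\<And>z. z \<in> S \<Longrightarrow> (u1 has_vector_derivative u2 z) (at z)"
    and d3: "\<And>z. z \<in> S \<Longrightarrow> (u2 has_vector_derivative u3 z) (at z)"
    and eq: "\<And>z. z \<in> S \<Longrightarrow>
               u3 z = (3 * (u z \<bullet> u z)) *\<^sub>R u1 z + z *\<^sub>R u1 z + u z + A *v u z"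
  shows "\<forall>z \<in> S. \<forall>\<zeta>::real. \<zeta> \<noteq> 0 \<longrightarrow>
           ((\<lambda>t. LaxA A (u t) (u1 t) (u2 t) t \<zeta>) has_vector_derivative
              (vector_derivative (\<lambda>s. LaxB (u z) s) (at \<zeta>)
               + (LaxB (u z) \<zeta> ** LaxA A (u z) (u1 z) (u2 z) z \<zeta>
                  - LaxA A (u z) (u1 z) (u2 z) z \<zeta> ** LaxB (u z) \<zeta>))) (at z)"
  unfolding vector_derivative_LaxB commutator_def[symmetric]
  by (blast intro: Lax_equation_at[OF skew] d1 d2 d3 eq)

end
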